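(* Let $d_1,\dots,d_n\ge1$, $\mu_i=x_i^{d_i}$, $I=\langle\mu_1,\dots,\mu_n\rangle\subseteq\mathbb K[x_1,\dots,x_n]$, and $k\ge1$ an integer. Then $I^k$ is good if and only if $I^k$ is very good.
   Context: Let $\mathbb K$ be a field, $R=\mathbb K[x_1,\dots,x_n]$, $\mathfrak m=\langle x_1,\dots,x_n\rangle$, $\mathbb N=\{0,1,2,\dots\}$. A monomial $x_1^{\alpha_1}\cdots x_n^{\alpha_n}$ is identified with the point $(\alpha_1,\dots,\alpha_n)\in\mathbb N^n$. For a monomial ideal $K$, $G(K)$ denotes its (unique) minimal monomial generating set. If $K$ is an $\mathfrak m$-primary monomial ideal, then for each $i$ there is a unique $e_i\ge1$ with $x_i^{e_i}\in G(K)$; write $\nu_i=x_i^{e_i}$ (for $K=I^k$ as in the claim, $e_i=kd_i$). For $(a_1,\dots,a_n)\in\mathbb N^n$ the box associated to $K$ is $B_{a_1,\dots,a_n}=([a_1e_1,(a_1+1)e_1]\times\cdots\times[a_ne_n,(a_n+1)e_n])\cap\mathbb N^n$; a monomial belongs to a box if its exponent vector does. $K$ is called good if for every integer $l\ge1$, every element of $G(K^l)$ belongs to some box $B_{a_1,\dots,a_n}$ with $a_1+\dots+a_n=l-1$. For a good ideal $K$ and $a\in\mathbb N^n$, with $l=a_1+\dots+a_n+1$, define $K_{a}=\left\langle \frac{m}{\nu_1^{a_1}\cdots\nu_n^{a_n}} : m\in B_{a}\cap G(K^l)\right\rangle$. A good ideal $K$ is called very good if $K_a=K$ for all $a\in\mathbb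 N^n$. *)

theory Defs
  imports Main
begin

text \<open>Monomials in K[x_i : i in 'n] are identified with exponent vectors 'n => nat.
A monomial ideal is identified with the (upward closed) set of exponent vectors
of the monomials it contains.\<close>

type_synonym 'n monomial = "'n \<Rightarrow> nat"
type_synonym 'n mideal = "'n monomial set"

definition mdvd :: "'n monomial \<Rightarrow> 'n monomial \<Rightarrow> bool" where
  "mdvd a b \<longleftrightarrow> (\<forall>i. a i \<le> b i)"

definition mgen :: "'n monomial set \<Rightarrow> 'n mideal" where
  "mgen S = {b. \<exists>a\<in>S. mdvd a b}"

definition mingens :: "'n mideal \<Rightarrow> 'n monomial set" where
  "mingens K = {a \<in> K. \<forall>b\<in>K. mdvd b a \<longrightarrow> b = a}"

definition mmult :: "'n mideal \<Rightarrow> 'n mideal \<Rightarrow> 'n mideal" where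
  "mmult K L = mgen {(\<lambda>i. a i + b i) | a b. a \<in> K \<and> b \<in> L}"

fun mpow :: "'n mideal \<Rightarrow> nat \<Rightarrow> 'n mideal" where
  "mpow K 0 = UNIV"
| "mpow K (Suc l) = mmult K (mpow K l)"

definition pp :: "'n \<Rightarrow> nat \<Rightarrow> 'n monomial" where
  "pp i e = (\<lambda>j. if j = i then e else 0)"

definition m_primary :: "('n::finite) mideal \<Rightarrow> bool" where
  "m_primary K \<longleftrightarrow> (\<forall>a\<in>K. \<forall>b. mdvd a b \<longrightarrow> b \<in> K) \<and> (\<lambda>_. 0) \<notin> K
     \<and> (\<forall>i. \<exists>e. pp i e \<in> K)"

definition pexp :: "'n mideal \<Rightarrow> 'n \<Rightarrow> nat" where
  "pexp K i = (LEAST e. pp i e \<in> K)"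

definition box :: "'n mideal \<Rightarrow> 'n monomial \<Rightarrow> 'n monomial set" where
  "box K a = {m. \<forall>i. a i * pexp K i \<le> m i \<and> m i \<le> (a i + 1) * pexp K i}"

definition good :: "('n::finite) mideal \<Rightarrow> bool" where
  "good K \<longleftrightarrow> m_primary K \<and>
     (\<forall>l\<ge>1. \<forall>m\<in>mingens (mpow K l). \<exists>a. (\<Sum>i\<in>UNIV. a i) = l - 1 \<and> m \<in> box K a)"

text \<open>K_a; division by nu_1^{a_1}...nu_n^{a_n} is exponent subtraction.\<close>
definition Ka :: "('n::finite) mideal \<Rightarrow> 'n monomial \<Rightarrow> 'n mideal" where
  "Ka K a = mgen {(\<lambda>i. m i - a i * pexp K i) | m.
      m \<in> box K a \<inter> mingens (mpow K ((\<Sum>i\<in>UNIV. a i) + 1))}"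

definition very_good :: "('n::finite) mideal \<Rightarrow> bool" where
  "very_good K \<longleftrightarrow> good K \<and> (\<forall>a. Ka K a = K)"

end

theory Submission
  imports Defs
begin

text \<open>Write \<open>\<mu>^c\<close> for \<open>\<mu>\<^sub>1^c\<^sub>1 \<cdots> \<mu>\<^sub>n^c\<^sub>n\<close> and \<open>|c| = c\<^sub>1 + \<dots> + c\<^sub>n\<close>.
The power \<open>I^m\<close> is generated by the \<open>\<mu>^c\<close> with \<open>|c| = m\<close>, and these are pairwise
incomparable, so they form \<open>G(I^m)\<close>. For \<open>K = I^k\<close> one has \<open>e\<^sub>i = k d\<^sub>i\<close>, i.e.
\<open>\<nu>^a = \<mu>^(k a)\<close>, and the elements of \<open>G(K^(|a|+1))\<close> in the box \<open>B\<^sub>a\<close> are exactly the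
\<open>\<mu>^(k a + c)\<close> with \<open>|c| = k\<close> (the upper bounds \<open>c\<^sub>i \<le> k\<close> hold automatically). Dividing
by \<open>\<nu>^a\<close> gives back \<open>G(K)\<close>, so \<open>K\<^sub>a = K\<close> for every \<open>a\<close>, and a good \<open>K\<close> is very good.\<close>

lemma mdvd_refl [simp]: "mdvd a a"
  by (simp add: mdvd_def)

lemma mdvd_trans: "mdvd a b \<Longrightarrow> mdvd b c \<Longrightarrow> mdvd a c"
  unfolding mdvd_def using order_trans by blast

lemma mgen_eqI:
  assumes "\<And>a. a \<in> A \<Longrightarrow> \<exists>b\<in>B. mdvd b a" and "\<And>b. b \<in> B \<Longrightarrow> \<exists>a\<in>A. mdvd a b"
  shows "mgen A = mgen B"
  unfolding mgen_def using assms mdvd_trans by blast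

lemma mmult_mgen:
  "mmult (mgen A) (mgen B) = mgen {(\<lambda>i. a i + b i) | a b. a \<in> A \<and> b \<in> B}"
  unfolding mmult_def
proof (rule mgen_eqI)
  fix x assume "x \<in> {(\<lambda>i. a i + b i) | a b. a \<in> mgen A \<and> b \<in> mgen B}"
  then obtain a b a' b' where "x = (\<lambda>i. a i + b i)" "a' \<in> A" "b' \<in> B" "mdvd a' a" "mdvd b' b"
    unfolding mgen_def by blast
  then show "\<exists>y\<in>{(\<lambda>i. a i + b i) | a b. a \<in> A \<and> b \<in> B}. mdvd y x"
    by (auto simp: mdvd_def intro!: add_mono)
next
  fix x assume "x \<in> {(\<lambda>i. a i + b i) | a b. a \<in> A \<and> b \<in> B}"
  then have "x \<in> {(\<lambda>i. a i + b i) | a b. a \<in> mgen A \<and> b \<in> mgen B}"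
    unfolding mgen_def by force
  then show "\<exists>y\<in>{(\<lambda>i. a i + b i) | a b. a \<in> mgen A \<and> b \<in> mgen B}. mdvd y x"
    by force
qed

lemma sum_pp: "sum (pp (i::'n::finite) e) UNIV = e"
  unfolding pp_def by (subst sum.remove[of UNIV i]) auto

lemma exists_le_with_sum:
  fixes c :: "'n::finite \<Rightarrow> nat"
  assumes "a \<le> sum c UNIV"
  shows "\<exists>c'. (\<forall>i. c' i \<le> c i) \<and> sum c' UNIV = a"
  using assms
proof (induction a)
  case 0
  show ?case by (intro exI[of _ "\<lambda>_. 0"]) simp
next
  case (Suc a)
  then obtain c' where c': "\<forall>i. c' i \<le> c i" "sum c' UNIV = a"
    by auto
  have "c' \<noteq> c"
    using Suc.prems c' by auto
  then obtain i where i: "c' i < c i"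
    using c' by (meson ext le_neq_implies_less)
  have "sum (c'(i := Suc (c' i))) UNIV = Suc (sum c' UNIV)"
    by (simp add: sum.remove[of UNIV i])
  moreover have "\<forall>j. (c'(i := Suc (c' i))) j \<le> c j"
    using c' i by auto
  ultimately show ?case
    using c' by blast
qed

definition pure_power_products :: "('n::finite \<Rightarrow> nat) \<Rightarrow> nat \<Rightarrow> 'n monomial set" where
  "pure_power_products d m = {(\<lambda>i. d i * c i) | c. sum c UNIV = m}"

lemma pure_power_products_add:
  "{(\<lambda>i. a i + b i) | a b. a \<in> pure_power_products d p \<and> b \<in> pure_power_products d q}
     = pure_power_products d (p + q)"
proof (intro equalityI subsetI)
  fix x assume "x \<in> {(\<lambda>i. a i + b i) | a b.
                      a \<in> pure_power_products d p \<and> b \<in> pure_power_products d q}"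
  then obtain c c' where "x = (\<lambda>i. d i * c i + d i * c' i)" "sum c UNIV = p" "sum c' UNIV = q"
    unfolding pure_power_products_def by blast
  then show "x \<in> pure_power_products d (p + q)"
    unfolding pure_power_products_def
    by (intro CollectI exI[of _ "\<lambda>i. c i + c' i"]) (simp add: sum.distrib algebra_simps)
next
  fix x assume "x \<in> pure_power_products d (p + q)"
  then obtain c where c: "x = (\<lambda>i. d i * c i)" "sum c UNIV = p + q"
    unfolding pure_power_products_def by blast
  then obtain c' where c': "\<forall>i. c' i \<le> c i" "sum c' UNIV = p"
    using exists_le_with_sum[of p c] by auto
  have "(\<lambda>i. d i * c' i) \<in> pure_power_products d p"
    unfolding pure_power_products_def using c' by blast
  moreover have "(\<lambda>i. d i * (c i - c' i)) \<in> pure_power_products d q"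
    unfolding pure_power_products_def using c c'
    by (intro CollectI exI[of _ "\<lambda>i. c i - c' i"]) (simp add: sum_subtractf_nat)
  moreover have "x = (\<lambda>i. d i * c' i + d i * (c i - c' i))"
    using c c' by (auto simp: fun_eq_iff simp flip: add_mult_distrib2)
  ultimately show "x \<in> {(\<lambda>i. a i + b i) | a b.
                          a \<in> pure_power_products d p \<and> b \<in> pure_power_products d q}"
    by (intro CollectI exI[of _ "\<lambda>i. d i * c' i"] exI[of _ "\<lambda>i. d i * (c i - c' i)"]) simp
qed

lemma mgen_pure_power_products_0: "mgen (pure_power_products d 0) = UNIV"
proof -
  have "(\<lambda>_. 0) \<in> pure_power_products d 0"
    unfolding pure_power_products_def by (intro CollectI exI[of _ "\<lambda>_. 0"]) auto
  then show ?thesis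
    unfolding mgen_def mdvd_def by force
qed

lemma mpow_mgen_pure_power_products:
  "mpow (mgen (pure_power_products d k)) l = mgen (pure_power_products d (k * l))"
  by (induction l) (simp_all add: mgen_pure_power_products_0 mmult_mgen pure_power_products_add)

lemma mgen_pure_powers:
  "mgen {pp i (d i) | i. True} = mgen (pure_power_products d 1)"
proof (rule mgen_eqI)
  fix a assume "a \<in> {pp i (d i) | i. True}"
  then obtain i where "a = pp i (d i)"
    by auto
  moreover have "pp i (d i) = (\<lambda>j. d j * pp i 1 j)"
    by (auto simp: pp_def fun_eq_iff)
  ultimately have "a \<in> pure_power_products d 1"
    unfolding pure_power_products_def using sum_pp[of i 1] by blast
  then show "\<exists>b\<in>pure_power_products d 1. mdvd b a"
    using mdvd_refl by blast
next
  fix b assume "b \<in> pure_power_products d 1"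
  then obtain c where c: "b = (\<lambda>i. d i * c i)" "sum c UNIV = 1"
    unfolding pure_power_products_def by blast
  then obtain i where "c i \<noteq> 0"
    by (metis sum.neutral zero_neq_one)
  then have "mdvd (pp i (d i)) b"
    using c by (auto simp: mdvd_def pp_def)
  then show "\<exists>a\<in>{pp i (d i) | i. True}. mdvd a b"
    by blast
qed

lemma mpow_mgen_pure_powers:
  "mpow (mgen {pp i (d i) | i. True}) k = mgen (pure_power_products d k)"
  using mpow_mgen_pure_power_products[of d 1 k] by (simp only: mgen_pure_powers mult_1)

lemma pexp_mgen_pure_power_products:
  assumes d: "\<forall>i. d i \<ge> 1"
  shows "pexp (mgen (pure_power_products d k)) i = k * d i"
proof -
  have "pp i e \<in> mgen (pure_power_products d k) \<longleftrightarrow> k * d i \<le> e" for e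
  proof
    assume "pp i e \<in> mgen (pure_power_products d k)"
    then obtain c where c: "sum c UNIV = k" "mdvd (\<lambda>j. d j * c j) (pp i e)"
      unfolding mgen_def pure_power_products_def by blast
    have "c j = 0" if "j \<noteq> i" for j
      using c(2) d that unfolding mdvd_def pp_def by (metis le_zero_eq mult_is_0 not_one_le_zero)
    then have "c i = k"
      using c(1) by (simp add: sum.remove[of UNIV i])
    then show "k * d i \<le> e"
      using c(2) unfolding mdvd_def pp_def by (metis mult.commute)
  next
    assume "k * d i \<le> e"
    moreover have "(\<lambda>j. d j * pp i k j) \<in> pure_power_products d k"
      unfolding pure_power_products_def using sum_pp[of i k] by blast
    ultimately show "pp i e \<in> mgen (pure_power_products d k)"
      unfolding mgen_def
      by (intro CollectI bexI[of _ "\<lambda>j. d j * pp i k j"]) (auto simp: mdvd_def pp_def mult.commute)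
  qed
  then show ?thesis
    unfolding pexp_def by (auto intro: Least_equality)
qed

lemma mingens_mgen_pure_power_products:
  assumes d: "\<forall>i. d i \<ge> 1"
  shows "mingens (mgen (pure_power_products d m)) = pure_power_products d m"
proof (intro equalityI subsetI)
  fix x assume x: "x \<in> mingens (mgen (pure_power_products d m))"
  then obtain y where y: "y \<in> pure_power_products d m" "mdvd y x"
    unfolding mingens_def mgen_def by blast
  then have "y \<in> mgen (pure_power_products d m)"
    unfolding mgen_def using mdvd_refl by blast
  then show "x \<in> pure_power_products d m"
    using x y unfolding mingens_def by blast
next
  fix x assume x: "x \<in> pure_power_products d m"
  then obtain c where c: "x = (\<lambda>i. d i * c i)" "sum c UNIV = m"
    unfolding pure_power_products_def by blast
  have "b = x" if b: "b \<in> mgen (pure_power_products d m)" "mdvd b x" for b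
  proof -
    obtain c' where c': "sum c' UNIV = m" "mdvd (\<lambda>i. d i * c' i) b"
      using b unfolding mgen_def pure_power_products_def by blast
    have le: "c' i \<le> c i" for i
    proof -
      have "d i * c' i \<le> d i * c i"
        using c' b c unfolding mdvd_def by (meson order_trans)
      then show ?thesis
        using d[rule_format, of i] by auto
    qed
    have "c' = c"
    proof (rule ccontr)
      assume "c' \<noteq> c"
      then obtain i where "c' i < c i"
        using le by (metis fun_eq_iff le_neq_implies_less)
      then have "sum c' UNIV < sum c UNIV"
        using le by (intro sum_strict_mono_ex1) auto
      then show False
        using c c' by simp
    qed
    then show "b = x"
      using c' b c unfolding mdvd_def by (auto simp: fun_eq_iff intro: le_antisym)
  qed
  moreover have "x \<in> mgen (pure_power_products d m)"
    using x mdvd_refl unfolding mgen_def by blast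
  ultimately show "x \<in> mingens (mgen (pure_power_products d m))"
    unfolding mingens_def by blast
qed

lemma box_quotients_pure_power_products:
  assumes d: "\<forall>i. d i \<ge> 1"
  shows "{(\<lambda>i. m i - a i * (k * d i)) | m.
            (\<forall>i. a i * (k * d i) \<le> m i \<and> m i \<le> (a i + 1) * (k * d i))
            \<and> m \<in> pure_power_products d (k * (sum a UNIV + 1))}
         = pure_power_products d k"
    (is "?Q = _")
proof (intro equalityI subsetI)
  fix y assume "y \<in> ?Q"
  then obtain c where c: "y = (\<lambda>i. d i * c i - a i * (k * d i))"
      "sum c UNIV = k * (sum a UNIV + 1)" "\<forall>i. a i * (k * d i) \<le> d i * c i"
    unfolding pure_power_products_def by blast
  have ge: "k * a i \<le> c i" for i
  proof -
    have "d i * (k * a i) \<le> d i * c i"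
      using c(3) by (metis mult.commute mult.left_commute)
    then show ?thesis
      using d[rule_format, of i] by auto
  qed
  have "y = (\<lambda>i. d i * (c i - k * a i))"
    using c(1) by (simp add: fun_eq_iff diff_mult_distrib2 algebra_simps)
  moreover have "sum (\<lambda>i. c i - k * a i) UNIV = k"
    using c(2) ge by (simp add: sum_subtractf_nat sum_distrib_left algebra_simps)
  ultimately show "y \<in> pure_power_products d k"
    unfolding pure_power_products_def by (intro CollectI exI[of _ "\<lambda>i. c i - k * a i"]) simp
next
  fix y assume "y \<in> pure_power_products d k"
  then obtain c where c: "y = (\<lambda>i. d i * c i)" "sum c UNIV = k"
    unfolding pure_power_products_def by blast
  define m where "m = (\<lambda>i. d i * (c i + k * a i))"
  have "m \<in> pure_power_products d (k * (sum a UNIV + 1))"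
    unfolding m_def pure_power_products_def using c(2)
    by (intro CollectI exI[of _ "\<lambda>i. c i + k * a i"])
       (simp add: sum.distrib sum_distrib_left algebra_simps)
  moreover have "c i \<le> k" for i
    using member_le_sum[of i UNIV c] c(2) by simp
  then have "a i * (k * d i) \<le> m i \<and> m i \<le> (a i + 1) * (k * d i)" for i
    unfolding m_def by (simp add: algebra_simps)
  moreover have "y = (\<lambda>i. m i - a i * (k * d i))"
    unfolding m_def c(1) by (simp add: fun_eq_iff algebra_simps)
  ultimately show "y \<in> ?Q"
    by blast
qed

lemma Ka_mgen_pure_power_products:
  assumes d: "\<forall>i. d i \<ge> 1"
  shows "Ka (mgen (pure_power_products d k)) a = mgen (pure_power_products d k)"
proof -
  let ?K = "mgen (pure_power_products d k)"
  have "pexp ?K = (\<lambda>i. k * d i)"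
    using pexp_mgen_pure_power_products[OF d] by auto
  moreover have "mingens (mpow ?K (sum a UNIV + 1))
                   = pure_power_products d (k * (sum a UNIV + 1))"
    by (simp only: mpow_mgen_pure_power_products mingens_mgen_pure_power_products[OF d])
  ultimately show ?thesis
    unfolding Ka_def box_def using box_quotients_pure_power_products[OF d, of a k] by simp
qed

theorem mainTheorem19:
  fixes d :: "'n::finite \<Rightarrow> nat" and k :: nat
  assumes "\<forall>i. d i \<ge> 1" and "k \<ge> 1"
  shows "good (mpow (mgen {pp i (d i) | i. True}) k)
     \<longleftrightarrow> very_good (mpow (mgen {pp i (d i) | i. True}) k)"
  unfolding very_good_def mpow_mgen_pure_powers
  using Ka_mgen_pure_power_products[OF assms(1)] by simp

end
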